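(* Let $x\in S_n$ with $x_i>x_{i+1}$, and let $y$ be obtained from $x$ by transposing $x_i$ and $x_{i+1}$, so that $x$ covers $y$ in the weak order. Then a lattice congruence $\Theta$ on $S_n$ contracts the edge $y\lessdot x$ (i.e. $x\equiv y$) if and only if it contracts the join-irreducible $\lambda(x,i)$.
   Context: $S_n$: permutations of $[n]$ in one-line notation with the right weak order ($x\le y$ iff the set of inverted value pairs of $x$ is contained in that of $y$), a lattice. A join-irreducible $\gamma$ covers exactly one element $\gamma_*$; $\Theta$ contracts $\gamma$ if $\gamma\equiv\gamma_*$. For $x$ with $x_i>x_{i+1}$, set $A(x,i)=\{x_j:1\le j\le i,\ x_j>x_i\}\cup\{x_j:i+1\le j\le n,\ x_j\ge x_{i+1}\}$, and let $\lambda(x,i)$ be the permutation consisting of the elements of $[n]\setminus A(x,i)$ in increasing order followed by the elements of $A(x,i)$ in increasing order; it is join-irreducible. *)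

theory Defs
  imports Main
begin

definition perms :: "nat \<Rightarrow> nat list set" where
  "perms n = {xs. distinct xs \<and> set xs = {1..n}}"

definition inversions :: "nat list \<Rightarrow> (nat \<times> nat) set" where
  "inversions xs = {(a, b). a < b \<and>
     (\<exists>i j. i < j \<and> j < length xs \<and> xs ! i = b \<and> xs ! j = a)}"

definition weak_le :: "nat list \<Rightarrow> nat list \<Rightarrow> bool" where
  "weak_le x y \<longleftrightarrow> inversions x \<subseteq> inversions y"

definition weak_join :: "nat \<Rightarrow> nat list \<Rightarrow> nat list \<Rightarrow> nat list" where
  "weak_join n x y = (THE z. z \<in> perms n \<and> weak_le x z \<and> weak_le y z \<and>
     (\<forall>w\<in>perms n. weak_le x w \<and> weak_le y w \<longrightarrow> weak_le z w))"

definition weak_meet :: "nat \<Rightarrow> nat list \<Rightarrow> nat list \<Rightarrow> nat list" where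
  "weak_meet n x y = (THE z. z \<in> perms n \<and> weak_le z x \<and> weak_le z y \<and>
     (\<forall>w\<in>perms n. weak_le w x \<and> weak_le w y \<longrightarrow> weak_le w z))"

definition lattice_congruence :: "nat \<Rightarrow> (nat list \<times> nat list) set \<Rightarrow> bool" where
  "lattice_congruence n \<Theta> \<longleftrightarrow> equiv (perms n) \<Theta> \<and>
     (\<forall>x y z. (x, y) \<in> \<Theta> \<longrightarrow> z \<in> perms n \<longrightarrow>
        (weak_join n x z, weak_join n y z) \<in> \<Theta> \<and>
        (weak_meet n x z, weak_meet n y z) \<in> \<Theta>)"

definition weak_covers :: "nat \<Rightarrow> nat list \<Rightarrow> nat list \<Rightarrow> bool" where
  "weak_covers n x y \<longleftrightarrow> x \<in> perms n \<and> y \<in> perms n \<and> weak_le y x \<and> x \<noteq> y \<and>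
     \<not> (\<exists>z\<in>perms n. weak_le y z \<and> weak_le z x \<and> z \<noteq> y \<and> z \<noteq> x)"

definition join_irreducible :: "nat \<Rightarrow> nat list \<Rightarrow> bool" where
  "join_irreducible n g \<longleftrightarrow> g \<in> perms n \<and> (\<exists>!h. weak_covers n g h)"

text \<open>The unique element covered by a join-irreducible.\<close>
definition lower_cover :: "nat \<Rightarrow> nat list \<Rightarrow> nat list" where
  "lower_cover n g = (THE h. weak_covers n g h)"

definition contracts :: "nat \<Rightarrow> (nat list \<times> nat list) set \<Rightarrow> nat list \<Rightarrow> bool" where
  "contracts n \<Theta> g \<longleftrightarrow> (g, lower_cover n g) \<in> \<Theta>"

text \<open>A(x,i), with 0-based position k (paper's i = k+1).\<close>
definition A_set :: "nat list \<Rightarrow> nat \<Rightarrow> nat set" where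
  "A_set x k = {x ! j | j. j \<le> k \<and> x ! j > x ! k}
             \<union> {x ! j | j. k + 1 \<le> j \<and> j < length x \<and> x ! j \<ge> x ! (k + 1)}"

definition lam :: "nat list \<Rightarrow> nat \<Rightarrow> nat list" where
  "lam x k = sorted_list_of_set ({1..length x} - A_set x k) @ sorted_list_of_set (A_set x k)"

end

theory Submission
  imports Defs
begin

text \<open>
  Write a = x!k > b = x!(k+1); the cover y < x adds exactly the inversion (b, a).
  The permutation lam x k lists the complement of A = A(x,k) increasingly and then A
  increasingly, so its inversions are the pairs (c, d) with c < d, c in A and d not in A.
  As b = min A and a = max of the complement, lam x k = P a b Q covers P b a Q through the
  same inversion (b, a), and no other permutation below lam x k has that inversion.
  Since moreover lam x k \<le> x, the meets with lam x k send x, y to lam x k, P b a Q and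
  the joins with y send lam x k, P b a Q to x, y: the two covers are perspective, so every
  lattice congruence contracts both or neither.
\<close>

section \<open>Relative order of entries in a list\<close>

definition precedes :: "'a list \<Rightarrow> 'a \<Rightarrow> 'a \<Rightarrow> bool" where
  "precedes xs s t \<longleftrightarrow> (\<exists>i j. i < j \<and> j < length xs \<and> xs ! i = s \<and> xs ! j = t)"

lemma inversions_eq_precedes: "inversions xs = {(a, b). a < b \<and> precedes xs b a}"
  unfolding inversions_def precedes_def by auto

lemma precedes_Nil [simp]: "\<not> precedes [] s t"
  unfolding precedes_def by auto

lemma precedes_Cons [simp]:
  "precedes (u # l) s t \<longleftrightarrow> (s = u \<and> t \<in> set l) \<or> precedes l s t"
proof
  assume "precedes (u # l) s t"
  then obtain i j where ij: "i < j" "j < length (u # l)" "(u # l) ! i = s" "(u # l) ! j = t"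
    unfolding precedes_def by blast
  show "(s = u \<and> t \<in> set l) \<or> precedes l s t"
  proof (cases i)
    case 0
    then show ?thesis
      using ij by (cases j) auto
  next
    case (Suc i')
    then obtain j' where "j = Suc j'"
      using ij by (cases j) auto
    then have "precedes l s t"
      unfolding precedes_def using ij Suc by (intro exI[of _ i'] exI[of _ j']) auto
    then show ?thesis ..
  qed
next
  assume "(s = u \<and> t \<in> set l) \<or> precedes l s t"
  then show "precedes (u # l) s t"
  proof
    assume "s = u \<and> t \<in> set l"
    then obtain j where "j < length l" "l ! j = t" "s = u"
      by (auto simp: in_set_conv_nth)
    then show ?thesis
      unfolding precedes_def by (intro exI[of _ 0] exI[of _ "Suc j"]) auto
  next
    assume "precedes l s t"
    then obtain i j where "i < j" "j < length l" "l ! i = s" "l ! j = t"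
      unfolding precedes_def by blast
    then show ?thesis
      unfolding precedes_def by (intro exI[of _ "Suc i"] exI[of _ "Suc j"]) auto
  qed
qed

lemma precedes_in_set: "precedes l s t \<Longrightarrow> s \<in> set l \<and> t \<in> set l"
  by (induction l) auto

lemma precedes_append:
  "precedes (l1 @ l2) s t \<longleftrightarrow> precedes l1 s t \<or> precedes l2 s t \<or> (s \<in> set l1 \<and> t \<in> set l2)"
  by (induction l1) auto

lemma precedes_sorted:
  fixes l :: "'a::linorder list"
  shows "sorted_wrt (<) l \<Longrightarrow> precedes l s t \<longleftrightarrow> s \<in> set l \<and> t \<in> set l \<and> s < t"
  by (induction l) (auto dest: precedes_in_set)

lemma precedes_asym: "distinct l \<Longrightarrow> precedes l s t \<Longrightarrow> \<not> precedes l t s"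
  by (induction l) (auto dest: precedes_in_set)

lemma precedes_total:
  "s \<in> set l \<Longrightarrow> t \<in> set l \<Longrightarrow> s \<noteq> t \<Longrightarrow> precedes l s t \<or> precedes l t s"
  by (induction l) auto

lemma precedes_trans: "distinct l \<Longrightarrow> precedes l s t \<Longrightarrow> precedes l t r \<Longrightarrow> precedes l s r"
  by (induction l) (auto dest: precedes_in_set)

lemma distinct_eq_if_precedes_eq:
  assumes "distinct xs" "distinct ys" "set xs = set ys" "\<And>s t. precedes xs s t = precedes ys s t"
  shows "xs = ys"
  using assms
proof (induction xs arbitrary: ys)
  case Nil
  then show ?case by simp
next
  case (Cons u xs)
  then obtain w ys' where ys: "ys = w # ys'"
    by (cases ys) auto
  have "u = w"
  proof (rule ccontr)
    assume "u \<noteq> w"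
    then have "precedes ys w u"
      using Cons.prems ys by auto
    then show False
      using Cons.prems(1,4) \<open>u \<noteq> w\<close> by (auto dest: precedes_in_set)
  qed
  moreover have "precedes xs s t = precedes ys' s t" for s t
    using Cons.prems ys \<open>u = w\<close> by (metis distinct.simps(2) precedes_Cons precedes_in_set)
  moreover have "set xs = set ys'"
    using Cons.prems(1-3) ys \<open>u = w\<close> by (simp add: insert_ident)
  ultimately show ?case
    using Cons ys by simp
qed

lemma precedes_iff_inversions:
  assumes "distinct xs"
  shows "precedes xs s t \<longleftrightarrow> s \<in> set xs \<and> t \<in> set xs \<and> s \<noteq> t \<and>
    (if s < t then (s, t) \<notin> inversions xs else (t, s) \<in> inversions xs)"
  using precedes_total[of s xs t] precedes_asym[OF assms, of s t] precedes_asym[OF assms, of s s]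
    precedes_in_set[of xs s t]
  by (cases "s = t") (auto simp: inversions_eq_precedes)

lemma inj_on_inversions_perms: "inj_on inversions (perms n)"
proof (rule inj_onI)
  fix x z
  assume x: "x \<in> perms n" and z: "z \<in> perms n" and inv: "inversions x = inversions z"
  then have "precedes x s t = precedes z s t" for s t
    by (simp add: precedes_iff_inversions perms_def)
  then show "x = z"
    using x z by (intro distinct_eq_if_precedes_eq) (auto simp: perms_def)
qed

section \<open>Inversion sets and the weak order\<close>

lemma inversions_swap_adjacent:
  assumes "distinct (P @ u # v # Q)" "v < u"
  shows "inversions (P @ u # v # Q) = insert (v, u) (inversions (P @ v # u # Q))"
    and "(v, u) \<notin> inversions (P @ v # u # Q)"
  using assms unfolding inversions_eq_precedes by (auto simp: precedes_append dest: precedes_in_set)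

lemma perms_swap_adjacent: "P @ u # v # Q \<in> perms n \<Longrightarrow> P @ v # u # Q \<in> perms n"
  by (auto simp: perms_def)

lemma length_perms: "x \<in> perms n \<Longrightarrow> length x = n"
  unfolding perms_def by (metis (mono_tags) card_atLeastAtMost diff_Suc_1 distinct_card mem_Collect_eq)

lemma weak_le_antisym: "x \<in> perms n \<Longrightarrow> z \<in> perms n \<Longrightarrow> weak_le x z \<Longrightarrow> weak_le z x \<Longrightarrow> x = z"
  unfolding weak_le_def by (meson inj_on_inversions_perms inj_onD subset_antisym)

lemma weak_join_eqI:
  assumes "z \<in> perms n" "weak_le p z" "weak_le q z"
    and "\<And>w. w \<in> perms n \<Longrightarrow> weak_le p w \<Longrightarrow> weak_le q w \<Longrightarrow> weak_le z w"
  shows "weak_join n p q = z"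
  unfolding weak_join_def
proof (rule the_equality)
  fix z'
  assume "z' \<in> perms n \<and> weak_le p z' \<and> weak_le q z' \<and>
     (\<forall>w\<in>perms n. weak_le p w \<and> weak_le q w \<longrightarrow> weak_le z' w)"
  then show "z' = z"
    using assms by (blast intro: weak_le_antisym)
qed (use assms in blast)

lemma weak_meet_eqI:
  assumes "z \<in> perms n" "weak_le z p" "weak_le z q"
    and "\<And>w. w \<in> perms n \<Longrightarrow> weak_le w p \<Longrightarrow> weak_le w q \<Longrightarrow> weak_le w z"
  shows "weak_meet n p q = z"
  unfolding weak_meet_def
proof (rule the_equality)
  fix z'
  assume "z' \<in> perms n \<and> weak_le z' p \<and> weak_le z' q \<and>
     (\<forall>w\<in>perms n. weak_le w p \<and> weak_le w q \<longrightarrow> weak_le w z')"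
  then show "z' = z"
    using assms by (blast intro: weak_le_antisym)
qed (use assms in blast)

lemma weak_covers_if_inversions_insert:
  assumes "J \<in> perms n" "Js \<in> perms n"
    and "inversions J = insert p (inversions Js)" "p \<notin> inversions Js"
  shows "weak_covers n J Js"
proof -
  have "z = Js \<or> z = J"
    if "z \<in> perms n" "weak_le Js z" "weak_le z J" for z
  proof (cases "p \<in> inversions z")
    case True
    then have "weak_le J z"
      using that(2) assms(3) by (auto simp: weak_le_def)
    then show ?thesis
      using that assms(1) weak_le_antisym by blast
  next
    case False
    then have "weak_le z Js"
      using that(3) assms(3) by (auto simp: weak_le_def)
    then show ?thesis
      using that assms(2) weak_le_antisym by blast
  qed
  then show ?thesis
    using assms unfolding weak_covers_def weak_le_def by auto
qed

lemma lower_cover_eqI: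
  assumes "J \<in> perms n" "Js \<in> perms n"
    and "inversions J = insert p (inversions Js)" "p \<notin> inversions Js"
    and "\<And>h. h \<in> perms n \<Longrightarrow> weak_le h J \<Longrightarrow> p \<in> inversions h \<Longrightarrow> h = J"
  shows "lower_cover n J = Js"
  unfolding lower_cover_def
proof (rule the_equality)
  show "weak_covers n J Js"
    using assms(1-4) by (rule weak_covers_if_inversions_insert)
next
  fix h
  assume cov: "weak_covers n J h"
  then have "h \<in> perms n" "weak_le h J" "h \<noteq> J"
    unfolding weak_covers_def by auto
  then have "p \<notin> inversions h"
    using assms(5) by blast
  then have "weak_le h Js"
    using \<open>weak_le h J\<close> assms(3) by (auto simp: weak_le_def)
  moreover have "weak_le Js J" "Js \<noteq> J"
    using assms(3,4) by (auto simp: weak_le_def)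
  ultimately show "h = Js"
    using cov assms(2) unfolding weak_covers_def by blast
qed

lemma lattice_congruence_perspective_iff:
  assumes \<Theta>: "lattice_congruence n \<Theta>"
    and perms: "x \<in> perms n" "y \<in> perms n" "J \<in> perms n" "Js \<in> perms n"
    and xy: "inversions x = insert p (inversions y)" "p \<notin> inversions y"
    and JJs: "inversions J = insert p (inversions Js)" "p \<notin> inversions Js"
    and "weak_le J x"
  shows "(x, y) \<in> \<Theta> \<longleftrightarrow> (J, Js) \<in> \<Theta>"
proof -
  have "weak_le Js y"
    using \<open>weak_le J x\<close> xy JJs by (auto simp: weak_le_def)
  have meet_x: "weak_meet n x J = J"
    using perms \<open>weak_le J x\<close> by (intro weak_meet_eqI) (auto simp: weak_le_def)
  have meet_y: "weak_meet n y J = Js"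
    using perms \<open>weak_le Js y\<close> xy JJs by (intro weak_meet_eqI) (auto simp: weak_le_def)
  have join_J: "weak_join n J y = x"
    using perms \<open>weak_le J x\<close> xy JJs by (intro weak_join_eqI) (auto simp: weak_le_def)
  have join_Js: "weak_join n Js y = y"
    using perms \<open>weak_le Js y\<close> by (intro weak_join_eqI) (auto simp: weak_le_def)
  show ?thesis
  proof
    assume "(x, y) \<in> \<Theta>"
    then have "(weak_meet n x J, weak_meet n y J) \<in> \<Theta>"
      using \<Theta> perms(3) unfolding lattice_congruence_def by blast
    then show "(J, Js) \<in> \<Theta>"
      unfolding meet_x meet_y .
  next
    assume "(J, Js) \<in> \<Theta>"
    then have "(weak_join n J y, weak_join n Js y) \<in> \<Theta>"
      using \<Theta> perms(2) unfolding lattice_congruence_def by blast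
    then show "(x, y) \<in> \<Theta>"
      unfolding join_J join_Js .
  qed
qed

lemma lattice_congruence_swap_iff:
  assumes "lattice_congruence n \<Theta>" "T @ a # b # R \<in> perms n" "P @ a # b # Q \<in> perms n" "b < a"
    and "weak_le (P @ a # b # Q) (T @ a # b # R)"
  shows "(T @ a # b # R, T @ b # a # R) \<in> \<Theta> \<longleftrightarrow> (P @ a # b # Q, P @ b # a # Q) \<in> \<Theta>"
proof (rule lattice_congruence_perspective_iff)
  show "T @ b # a # R \<in> perms n" "P @ b # a # Q \<in> perms n"
    using assms(2,3) by (simp_all add: perms_swap_adjacent)
  have "distinct (T @ a # b # R)" "distinct (P @ a # b # Q)"
    using assms(2,3) by (simp_all add: perms_def)
  then show "inversions (T @ a # b # R) = insert (b, a) (inversions (T @ b # a # R))"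
    "(b, a) \<notin> inversions (T @ b # a # R)"
    "inversions (P @ a # b # Q) = insert (b, a) (inversions (P @ b # a # Q))"
    "(b, a) \<notin> inversions (P @ b # a # Q)"
    using assms(4) by (simp_all add: inversions_swap_adjacent)
qed (use assms in simp_all)

section \<open>Grassmannian permutations\<close>

lemma sorted_list_of_set_insert_greatest:
  fixes a :: "'a::linorder"
  assumes "finite B" "\<And>d. d \<in> B \<Longrightarrow> d < a"
  shows "sorted_list_of_set (insert a B) = sorted_list_of_set B @ [a]"
  using assms
  by (subst sorted_list_of_set_unique[symmetric]) (auto simp: sorted_wrt_append card_insert_if)

lemma sorted_list_of_set_insert_least:
  fixes b :: "'a::linorder"
  assumes "finite B" "\<And>c. c \<in> B \<Longrightarrow> b < c"
  shows "sorted_list_of_set (insert b B) = b # sorted_list_of_set B"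
  using assms by (subst sorted_list_of_set_unique[symmetric]) (auto simp: card_insert_if)

definition grassmannian :: "nat \<Rightarrow> nat set \<Rightarrow> nat list" where
  "grassmannian n A = sorted_list_of_set ({1..n} - A) @ sorted_list_of_set A"

lemma lam_eq_grassmannian: "lam x k = grassmannian (length x) (A_set x k)"
  unfolding lam_def grassmannian_def ..

lemma grassmannian_in_perms: "A \<subseteq> {1..n} \<Longrightarrow> grassmannian n A \<in> perms n"
  unfolding grassmannian_def perms_def using finite_subset by fastforce

lemma inversions_grassmannian:
  assumes "finite A"
  shows "inversions (grassmannian n A) = {(c, d). c < d \<and> c \<in> A \<and> d \<in> {1..n} - A}"
  using assms unfolding inversions_eq_precedes grassmannian_def
  by (auto simp: precedes_append precedes_sorted)

lemma grassmannian_split: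
  assumes "A \<subseteq> {1..n}" "b \<in> A" "\<And>c. c \<in> A \<Longrightarrow> b \<le> c"
    and "a \<in> {1..n} - A" "\<And>d. d \<in> {1..n} - A \<Longrightarrow> d \<le> a"
  shows "grassmannian n A = sorted_list_of_set ({1..n} - A - {a}) @ a # b # sorted_list_of_set (A - {b})"
proof -
  have "sorted_list_of_set ({1..n} - A) = sorted_list_of_set (insert a ({1..n} - A - {a}))"
    using assms(4) by (simp add: insert_absorb)
  also have "\<dots> = sorted_list_of_set ({1..n} - A - {a}) @ [a]"
    using assms(5) by (intro sorted_list_of_set_insert_greatest) force+
  finally have last_a: "sorted_list_of_set ({1..n} - A) = sorted_list_of_set ({1..n} - A - {a}) @ [a]" .
  have "sorted_list_of_set A = sorted_list_of_set (insert b (A - {b}))"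
    using assms(2) by (simp add: insert_absorb)
  also have "\<dots> = b # sorted_list_of_set (A - {b})"
    using assms(1,3) by (intro sorted_list_of_set_insert_least) (auto intro: finite_subset le_neq_trans)
  finally have hd_b: "sorted_list_of_set A = b # sorted_list_of_set (A - {b})" .
  show ?thesis
    unfolding grassmannian_def last_a hd_b by simp
qed

lemma grassmannian_least:
  assumes A: "A \<subseteq> {1..n}" and b: "\<And>c. c \<in> A \<Longrightarrow> b \<le> c"
    and a: "\<And>d. d \<in> {1..n} - A \<Longrightarrow> d \<le> a"
    and h: "h \<in> perms n" "weak_le h (grassmannian n A)" "(b, a) \<in> inversions h"
  shows "h = grassmannian n A"
proof -
  have "finite A"
    using A finite_subset by blast
  have dh: "distinct h" and sh: "set h = {1..n}"
    using h(1) by (auto simp: perms_def)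
  have inv_h: "c \<in> A \<and> d \<in> {1..n} - A" if "c < d" "precedes h d c" for c d
  proof -
    have "(c, d) \<in> inversions h"
      using that by (simp add: inversions_eq_precedes)
    then show ?thesis
      using h(2) \<open>finite A\<close> by (auto simp: weak_le_def inversions_grassmannian)
  qed
  have ab: "precedes h a b"
    using h(3) by (simp add: inversions_eq_precedes)
  then have in_h: "a \<in> set h \<and> b \<in> set h"
    by (rule precedes_in_set)
  have "precedes h d c" if cd: "c < d" "c \<in> A" "d \<in> {1..n} - A" for c d
  proof (rule ccontr)
    \<comment> \<open>Otherwise h lists b, c, d, a in this order: an inversion (b, c) or (d, a) of h
      would be one of the Grassmannian, contradicting c \<in> A or d \<notin> A.\<close>
    assume "\<not> precedes h d c"
    then have "precedes h c d"
      using precedes_total[of c h d] cd A sh by auto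
    moreover have "b = c \<or> precedes h b c"
      using precedes_total[of b h c] inv_h[of b c] b[of c] cd A sh in_h by force
    moreover have "d = a \<or> precedes h d a"
      using precedes_total[of a h d] inv_h[of d a] a[of d] cd sh in_h by force
    ultimately have "precedes h b a"
      using precedes_trans[OF dh] by metis
    then show False
      using ab precedes_asym[OF dh] by blast
  qed
  then have "weak_le (grassmannian n A) h"
    unfolding weak_le_def inversions_grassmannian[OF \<open>finite A\<close>]
    by (auto simp: inversions_eq_precedes)
  then show ?thesis
    using weak_le_antisym h(1,2) grassmannian_in_perms[OF A] by blast
qed

lemma lower_cover_grassmannian:
  assumes A: "A \<subseteq> {1..n}" and b: "b \<in> A" "\<And>c. c \<in> A \<Longrightarrow> b \<le> c"
    and a: "a \<in> {1..n} - A" "\<And>d. d \<in> {1..n} - A \<Longrightarrow> d \<le> a" and "b < a"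
  shows "lower_cover n (grassmannian n A) =
    sorted_list_of_set ({1..n} - A - {a}) @ b # a # sorted_list_of_set (A - {b})"
    (is "_ = ?P @ b # a # ?Q")
proof (rule lower_cover_eqI)
  have split: "grassmannian n A = ?P @ a # b # ?Q"
    using A b a by (rule grassmannian_split)
  show perm: "grassmannian n A \<in> perms n"
    using A by (rule grassmannian_in_perms)
  then show "?P @ b # a # ?Q \<in> perms n"
    unfolding split by (rule perms_swap_adjacent)
  have "distinct (?P @ a # b # ?Q)"
    using perm unfolding split perms_def by blast
  then show "inversions (grassmannian n A) = insert (b, a) (inversions (?P @ b # a # ?Q))"
    "(b, a) \<notin> inversions (?P @ b # a # ?Q)"
    unfolding split using \<open>b < a\<close> by (simp_all add: inversions_swap_adjacent)
  show "h = grassmannian n A"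
    if "h \<in> perms n" "weak_le h (grassmannian n A)" "(b, a) \<in> inversions h" for h
    using A b(2) a(2) that by (rule grassmannian_least)
qed

section \<open>The set A(x,k) and the permutation lam x k\<close>

lemma take_nth_nth_drop:
  assumes "k + 1 < length x"
  shows "x = take k x @ x ! k # x ! (k + 1) # drop (k + 2) x"
    and "x[k := x ! (k + 1), k + 1 := x ! k] = take k x @ x ! (k + 1) # x ! k # drop (k + 2) x"
proof -
  show split: "x = take k x @ x ! k # x ! (k + 1) # drop (k + 2) x"
    using assms by (simp add: Cons_nth_drop_Suc)
  have "length (take k x) = k"
    using assms by simp
  then show "x[k := x ! (k + 1), k + 1 := x ! k] = take k x @ x ! (k + 1) # x ! k # drop (k + 2) x"
    by (subst split) (simp add: list_update_append)
qed

lemma mem_A_set: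
  "c \<in> A_set x k \<longleftrightarrow> (\<exists>j\<le>k. x ! k < x ! j \<and> c = x ! j) \<or>
    (\<exists>j. k < j \<and> j < length x \<and> x ! (k + 1) \<le> x ! j \<and> c = x ! j)"
  unfolding A_set_def Suc_eq_plus1[symmetric] Suc_le_eq by blast

lemma A_set_memI1: "j \<le> k \<Longrightarrow> x ! k < x ! j \<Longrightarrow> x ! j \<in> A_set x k"
  unfolding mem_A_set by blast

lemma A_set_memI2: "k < j \<Longrightarrow> j < length x \<Longrightarrow> x ! (k + 1) \<le> x ! j \<Longrightarrow> x ! j \<in> A_set x k"
  unfolding mem_A_set by blast

lemma A_set_subset:
  assumes "x \<in> perms n" "k < n"
  shows "A_set x k \<subseteq> {1..n}"
proof -
  have "x ! j \<in> {1..n}" if "j < n" for j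
    using that assms(1) length_perms[OF assms(1)] nth_mem by (fastforce simp: perms_def)
  then show ?thesis
    using assms length_perms[OF assms(1)] by (auto simp: mem_A_set)
qed

lemma nth_Suc_le_A_set:
  assumes "x ! (k + 1) < x ! k" "c \<in> A_set x k"
  shows "x ! (k + 1) \<le> c"
  using assms(2) unfolding mem_A_set using assms(1) by auto

lemma nth_notin_A_set:
  assumes "distinct x" "k < length x"
  shows "x ! k \<notin> A_set x k"
proof
  assume "x ! k \<in> A_set x k"
  then obtain j where "k < j" "j < length x" "x ! k = x ! j"
    unfolding mem_A_set by auto
  then show False
    using assms by (simp add: nth_eq_iff_index_eq)
qed

lemma le_nth_if_notin_A_set:
  assumes "x \<in> perms n" "x ! (k + 1) < x ! k" "d \<in> {1..n} - A_set x k"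
  shows "d \<le> x ! k"
proof (rule ccontr)
  assume "\<not> d \<le> x ! k"
  have "d \<in> set x"
    using assms(1,3) by (simp add: perms_def)
  then obtain i where i: "i < length x" "d = x ! i"
    by (metis in_set_conv_nth)
  have "d \<in> A_set x k"
  proof (cases "i \<le> k")
    case True
    then show ?thesis
      using i \<open>\<not> d \<le> x ! k\<close> by (simp add: A_set_memI1)
  next
    case False
    then show ?thesis
      using i \<open>\<not> d \<le> x ! k\<close> assms(2) by (simp add: A_set_memI2)
  qed
  then show False
    using assms(3) by blast
qed

lemma lam_weak_le:
  assumes "x \<in> perms n" "k < n" "x ! (k + 1) < x ! k"
  shows "weak_le (lam x k) x"
  unfolding weak_le_def
proof
  fix p
  have "finite (A_set x k)"
    using A_set_subset[OF assms(1,2)] finite_subset by blast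
  moreover assume "p \<in> inversions (lam x k)"
  ultimately obtain c d where p: "p = (c, d)" "c < d" "c \<in> A_set x k" "d \<in> {1..n} - A_set x k"
    unfolding lam_eq_grassmannian length_perms[OF assms(1)] by (auto simp: inversions_grassmannian)
  have "d \<le> x ! k"
    using assms(1,3) p(4) by (rule le_nth_if_notin_A_set)
  then obtain j where j: "k < j" "j < length x" "x ! (k + 1) \<le> x ! j" "c = x ! j"
    using p(2,3) unfolding mem_A_set by auto
  have "d \<in> set x"
    using assms(1) p(4) by (simp add: perms_def)
  then obtain i where i: "i < length x" "d = x ! i"
    by (metis in_set_conv_nth)
  have "i \<le> k"
  proof (rule ccontr)
    assume "\<not> i \<le> k"
    then have "d \<in> A_set x k"
      using i j p(2) by (simp add: A_set_memI2)
    then show False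
      using p(4) by blast
  qed
  then have "precedes x d c"
    unfolding precedes_def using i j by (intro exI[of _ i] exI[of _ j]) auto
  then show "p \<in> inversions x"
    using p(1,2) by (simp add: inversions_eq_precedes)
qed

lemma lam_in_perms:
  assumes "x \<in> perms n" "k < n"
  shows "lam x k \<in> perms n"
  unfolding lam_eq_grassmannian length_perms[OF assms(1)]
  using A_set_subset[OF assms] by (rule grassmannian_in_perms)

lemma lower_cover_lam:
  assumes "x \<in> perms n" "k + 1 < n" "x ! (k + 1) < x ! k"
  obtains P Q where "lam x k = P @ x ! k # x ! (k + 1) # Q"
    and "lower_cover n (lam x k) = P @ x ! (k + 1) # x ! k # Q"
proof -
  define a b A where "a = x ! k" and "b = x ! (k + 1)" and "A = A_set x k"
  have len: "length x = n"
    using assms(1) by (rule length_perms)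
  have A: "A \<subseteq> {1..n}"
    unfolding A_def using assms(1,2) by (intro A_set_subset) auto
  have b_least: "b \<le> c" if "c \<in> A" for c
    using assms(3) that unfolding A_def b_def by (rule nth_Suc_le_A_set)
  have a_greatest: "d \<le> a" if "d \<in> {1..n} - A" for d
    using assms(1,3) that unfolding A_def a_def by (rule le_nth_if_notin_A_set)
  have "b \<in> A" "a \<in> {1..n} - A"
    using assms(1,2) len A_set_memI2[of k "k + 1" x] nth_notin_A_set[of x k]
    unfolding a_def b_def A_def perms_def by auto
  have "b < a"
    using assms(3) unfolding a_def b_def .
  note assms_grassmannian = A \<open>b \<in> A\<close> b_least \<open>a \<in> {1..n} - A\<close> a_greatest
  show ?thesis
    using that grassmannian_split[OF assms_grassmannian]
      lower_cover_grassmannian[OF assms_grassmannian \<open>b < a\<close>]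
    unfolding lam_eq_grassmannian len A_def a_def b_def by blast
qed

theorem proposition6p4:
  fixes n k :: nat and x y :: "nat list" and \<Theta> :: "(nat list \<times> nat list) set"
  assumes "x \<in> perms n"
    and "k + 1 < n"
    and "x ! k > x ! (k + 1)"
    and "y = x[k := x ! (k + 1), k + 1 := x ! k]"
    and "lattice_congruence n \<Theta>"
  shows "(x, y) \<in> \<Theta> \<longleftrightarrow> contracts n \<Theta> (lam x k)"
proof -
  define a b where "a = x ! k" and "b = x ! (k + 1)"
  obtain P Q where lam: "lam x k = P @ a # b # Q" and lower: "lower_cover n (lam x k) = P @ b # a # Q"
    using lower_cover_lam[OF assms(1-3)] unfolding a_def b_def .
  obtain T R where x: "x = T @ a # b # R" and y: "y = T @ b # a # R"
    using take_nth_nth_drop[of k x] assms(1,2,4) length_perms unfolding a_def b_def by metis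
  have "b < a"
    using assms(3) unfolding a_def b_def .
  moreover have "weak_le (lam x k) x"
    using assms(1,2,3) by (intro lam_weak_le) auto
  moreover have "lam x k \<in> perms n"
    using assms(1,2) by (intro lam_in_perms) auto
  ultimately have "(T @ a # b # R, T @ b # a # R) \<in> \<Theta> \<longleftrightarrow> (P @ a # b # Q, P @ b # a # Q) \<in> \<Theta>"
    using assms(1,5) unfolding lam by (intro lattice_congruence_swap_iff) (simp_all add: x[symmetric])
  then show ?thesis
    unfolding contracts_def lam lower[unfolded lam] unfolding x y .
qed

end
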